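(* Let $\mathrm B_1=\{\mathbf x^{\mathbf d}: d_i<w_{i,1}\ \forall i\}$ and $\mathrm B_2=\{\mathbf x^{\mathbf d}: d_i<w_{i,2}\ \forall i\}$ be boxes in $x_1,\dots,x_r$ (all $w_{i,1},w_{i,2}$ positive integers), and $\beta=\mathrm B_1\cup\mathrm B_2$. Let $w_i=\max(w_{i,1},w_{i,2})$, $V_1=\{x_j: w_{j,1}>w_{j,2}\}$ and $V_2=\{x_k: w_{k,1}<w_{k,2}\}$. Then every minimal generator of $I_\beta$ is either a corner monomial $x_i^{w_i}$ for some $i$, or a two-variable monomial $x_j^{w_{j,2}}x_k^{w_{k,1}}$ with $x_j\in V_1$ and $x_k\in V_2$.
   Context: $I_\beta$ is the monomial ideal generated by all monomials not in $\beta$; its minimal generators are its minimal monomials under divisibility. *)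

theory Defs
  imports Main
begin

text \<open>Monomials in the variables x_0, ..., x_(r-1) are represented by their exponent
  vectors d :: nat => nat, with d i = 0 for i >= r.\<close>

definition monomials :: "nat \<Rightarrow> (nat \<Rightarrow> nat) set" where
  "monomials r = {d. \<forall>i\<ge>r. d i = 0}"

definition mdvd :: "(nat \<Rightarrow> nat) \<Rightarrow> (nat \<Rightarrow> nat) \<Rightarrow> bool" where
  "mdvd d e \<longleftrightarrow> (\<forall>i. d i \<le> e i)"

definition box :: "nat \<Rightarrow> (nat \<Rightarrow> nat) \<Rightarrow> (nat \<Rightarrow> nat) set" where
  "box r w = {d \<in> monomials r. \<forall>i<r. d i < w i}"

definition monomial_ideal :: "nat \<Rightarrow> (nat \<Rightarrow> nat) set \<Rightarrow> (nat \<Rightarrow> nat) set" where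
  "monomial_ideal r S = {e \<in> monomials r. \<exists>g\<in>S. mdvd g e}"

definition I_beta :: "nat \<Rightarrow> (nat \<Rightarrow> nat) set \<Rightarrow> (nat \<Rightarrow> nat) set" where
  "I_beta r \<beta> = monomial_ideal r (monomials r - \<beta>)"

definition min_gens :: "(nat \<Rightarrow> nat) set \<Rightarrow> (nat \<Rightarrow> nat) set" where
  "min_gens I = {m \<in> I. \<forall>m'\<in>I. mdvd m' m \<longrightarrow> m' = m}"

end

theory Submission
  imports Defs
begin

text \<open>A monomial outside beta = B_1 \<union> B_2 leaves B_2 in some coordinate j and B_1 in some
  coordinate k. If one coordinate leaves both boxes, the monomial is divisible by a corner x_i^w_i;
  otherwise w_j,1 > w_j,2 and w_k,1 < w_k,2, and it is divisible by x_j^w_j,2 x_k^w_k,1. Both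
  divisors lie outside beta, so by minimality a minimal generator equals one of them.\<close>

lemma min_gens_I_betaD:
  assumes "m \<in> min_gens (I_beta r \<beta>)"
  shows min_gens_I_beta_eq: "\<And>e. e \<in> monomials r \<Longrightarrow> e \<notin> \<beta> \<Longrightarrow> mdvd e m \<Longrightarrow> e = m"
    and min_gens_I_beta_outside: "m \<in> monomials r - \<beta>"
proof -
  have mdvd_refl: "mdvd e e" for e
    by (simp add: mdvd_def)
  show eq: "e = m" if "e \<in> monomials r" "e \<notin> \<beta>" "mdvd e m" for e
  proof -
    have "e \<in> I_beta r \<beta>"
      using that mdvd_refl unfolding I_beta_def monomial_ideal_def by blast
    then show ?thesis
      using assms \<open>mdvd e m\<close> unfolding min_gens_def by blast
  qed
  obtain g where "g \<in> monomials r" "g \<notin> \<beta>" "mdvd g m" and "m \<in> monomials r"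
    using assms unfolding min_gens_def I_beta_def monomial_ideal_def by blast
  then show "m \<in> monomials r - \<beta>"
    using eq by blast
qed

lemma not_in_box_iff:
  assumes "d \<in> monomials r"
  shows "d \<notin> box r w \<longleftrightarrow> (\<exists>i<r. w i \<le> d i)"
  using assms unfolding box_def by auto

lemma outside_two_boxes_cases:
  assumes "d \<in> monomials r" "d \<notin> box r w1 \<union> box r w2"
  obtains (corner) i where "i < r" "max (w1 i) (w2 i) \<le> d i"
  | (mixed) j k where "j < r" "k < r" "w1 j > w2 j" "w1 k < w2 k" "w2 j \<le> d j" "w1 k \<le> d k"
proof -
  obtain j where j: "j < r" "w2 j \<le> d j"
    using assms not_in_box_iff by blast
  obtain k where k: "k < r" "w1 k \<le> d k"
    using assms not_in_box_iff by blast
  show thesis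
  proof (cases "w1 j \<le> d j \<or> w2 k \<le> d k")
    case True
    then show thesis
      using j k corner by (metis max_def)
  next
    case False
    then show thesis
      using j k mixed by fastforce
  qed
qed

theorem lemma11p2:
  fixes r :: nat and w1 w2 :: "nat \<Rightarrow> nat" and m :: "nat \<Rightarrow> nat"
  assumes pos: "\<forall>i<r. 0 < w1 i \<and> 0 < w2 i"
    and m: "m \<in> min_gens (I_beta r (box r w1 \<union> box r w2))"
  shows "(\<exists>i<r. m = (\<lambda>l. if l = i then max (w1 i) (w2 i) else 0))
       \<or> (\<exists>j<r. \<exists>k<r. w1 j > w2 j \<and> w1 k < w2 k \<and>
            m = (\<lambda>l. if l = j then w2 j else if l = k then w1 k else 0))"
proof -
  have "m \<in> monomials r" "m \<notin> box r w1 \<union> box r w2"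
    using min_gens_I_beta_outside [OF m] by auto
  then show ?thesis
  proof (cases rule: outside_two_boxes_cases)
    case (corner i)
    let ?e = "\<lambda>l. if l = i then max (w1 i) (w2 i) else 0"
    have "?e = m"
      using corner by (intro min_gens_I_beta_eq [OF m]) (auto simp: monomials_def box_def mdvd_def)
    then show ?thesis
      using corner by blast
  next
    case (mixed j k)
    let ?e = "\<lambda>l. if l = j then w2 j else if l = k then w1 k else 0"
    have "?e = m"
      using mixed by (intro min_gens_I_beta_eq [OF m]) (auto simp: monomials_def box_def mdvd_def)
    then show ?thesis
      using mixed by blast
  qed
qed

end
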